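(* Assume $x(0)=x'(0)=0$, $y_1(t)\to0$ and $x(t)\to0$ as $t\to\infty$. Let $L_2(t,s)=\omega^2\cos(\omega(t-s))-\omega\sin(\omega(t-s))$. Then $x'(t)\to0$ as $t\to\infty$ if and only if \[ \lim_{t\to\infty}\int_0^tE(t,s)L_2(t,s)y_1(s)\,ds=0. \]
   Context: Standing assumptions: $\omega>0$ is a constant; $p\in C^1([0,\infty))$ with $p(t)>0$ and $p'(t)<0$ for all $t\ge0$, $\int_0^\infty p(t)\,dt=\infty$ and $\int_0^\infty p(t)^2\,dt<\infty$; $f\in L^1_{\mathrm{loc}}([0,\infty))$. $x$ denotes the solution of $x''(t)+p(t)x'(t)+\omega^2x(t)=f(t)$, $t\ge0$. Notation: $E(t,s)=\exp(-\frac12\int_s^tp(\tau)\,d\tau)$ for $0\le s\le t$; $y_1(t)=\int_0^te^{-\omega^2(t-s)}f(s)\,ds$. *)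

theory Defs
  imports "HOL-Analysis.Analysis"
begin

definition E :: "(real \<Rightarrow> real) \<Rightarrow> real \<Rightarrow> real \<Rightarrow> real" where
  "E p t s = exp (- (1/2) * (LINT \<tau>:{s..t}|lborel. p \<tau>))"

definition y1 :: "real \<Rightarrow> (real \<Rightarrow> real) \<Rightarrow> real \<Rightarrow> real" where
  "y1 \<omega> f t = (LINT s:{0..t}|lborel. exp (- (\<omega>^2) * (t - s)) * f s)"

definition L2 :: "real \<Rightarrow> real \<Rightarrow> real \<Rightarrow> real" where
  "L2 \<omega> t s = \<omega>^2 * cos (\<omega> * (t - s)) - \<omega> * sin (\<omega> * (t - s))"

end

theory Submission
  imports Defs
begin

(*
  Let mu(t) = exp((1/2) int_0^t p), so that E(t,s) = mu(s) / mu(t). Then v = mu x solves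
  v'' + omega^2 v = mu (f + q x) with q = p^2/4 + p'/2, and Duhamel's formula for
  v' = mu (x' + p x / 2), followed by an integration by parts trading f for y1
  (y1' + omega^2 y1 = f, y1(0) = 0), gives

    x'(t) - int_0^t E(t,s) L2(t,s) y1(s) ds = y1(t) - p(t) x(t) / 2 + R(t),
    R(t) = mu(t)^-1 int_0^t mu(s) cos(omega (t - s)) (q x - p y1 / 2)(s) ds.

  |R(t)| is at most the sum of the averages of |y1| and |x| against the weights mu p / 2 and
  mu |q|, whose integrals over [0,t] are O(mu(t)): mu p / 2 = mu', and on [0,t] one has
  mu |q| <= mu(t) (p^2/4 - p'/2) since p' < 0, where int p^2 < oo. Since mu(t) -> oo while
  x, y1 -> 0, these averages vanish at infinity (Toeplitz), so x'(t) and the integral have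
  the same limit behaviour.
*)

lemma set_integral_triangle_Fubini:
  fixes g h :: "real \<Rightarrow> real"
  assumes g: "set_integrable lborel {a..b} g" and h: "set_integrable lborel {a..b} h"
  shows "(LINT s:{a..b}|lborel. h s * (LINT r:{a..s}|lborel. g r))
       = (LINT r:{a..b}|lborel. g r * (LINT s:{r..b}|lborel. h s))"
proof -
  define G where "G r = indicator {a..b} r * g r" for r
  define H where "H s = indicator {a..b} s * h s" for s
  define F where "F r s = G r * H s * of_bool (r \<le> s)" for r s
  have G_int: "integrable lborel G" and H_int: "integrable lborel H"
    using g h unfolding set_integrable_def G_def H_def by simp_all
  then have [measurable]: "G \<in> borel_measurable lborel" "H \<in> borel_measurable lborel"
    by (auto intro: borel_measurable_integrable)
  have "integrable (lborel \<Otimes>\<^sub>M lborel) (\<lambda>(r,s). \<bar>G r\<bar> * \<bar>H s\<bar>)"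
    by (rule lborel_pair.Fubini_integrable) (use G_int H_int in \<open>auto simp: abs_mult\<close>)
  then have "integrable (lborel \<Otimes>\<^sub>M lborel) (\<lambda>(r,s). F r s)"
    by (rule Bochner_Integration.integrable_bound) (auto simp: F_def abs_mult)
  then have "(LINT s|lborel. LINT r|lborel. F r s) = (LINT r|lborel. LINT s|lborel. F r s)"
    by (rule lborel_pair.Fubini_integral)
  moreover have "(LINT r|lborel. F r s) = H s * (LINT r:{a..s}|lborel. g r)" for s
  proof -
    have "(LINT r|lborel. F r s) = (LINT r|lborel. H s * (indicator {a..s} r *\<^sub>R g r))"
      by (rule Bochner_Integration.integral_cong) (auto simp: F_def G_def H_def indicator_def)
    then show ?thesis by (simp add: set_lebesgue_integral_def)
  qed
  moreover have "(LINT s|lborel. F r s) = G r * (LINT s:{r..b}|lborel. h s)" for r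
  proof -
    have "(LINT s|lborel. F r s) = (LINT s|lborel. G r * (indicator {r..b} s *\<^sub>R h s))"
      by (rule Bochner_Integration.integral_cong) (auto simp: F_def G_def H_def indicator_def)
    then show ?thesis by (simp add: set_lebesgue_integral_def)
  qed
  ultimately show ?thesis
    by (simp add: set_lebesgue_integral_def G_def H_def mult.assoc)
qed

lemma set_integrable_continuous_mult:
  fixes u g :: "real \<Rightarrow> real"
  assumes u: "continuous_on {a..b} u" and g: "set_integrable lborel {a..b} g"
  shows "set_integrable lborel {a..b} (\<lambda>s. u s * g s)"
proof -
  obtain M where M: "\<And>s. s \<in> {a..b} \<Longrightarrow> \<bar>u s\<bar> \<le> M"
    using compact_continuous_image[OF u compact_Icc] compact_imp_bounded bounded_iff
    by (metis image_eqI real_norm_def)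
  have "(\<lambda>s. indicator {a..b} s * u s) \<in> borel_measurable lborel"
    using borel_measurable_continuous_on_indicator[OF _ u] by simp
  moreover have "(\<lambda>s. indicator {a..b} s * g s) \<in> borel_measurable lborel"
    using g unfolding set_integrable_def by (simp add: borel_measurable_integrable)
  moreover have "(\<lambda>s. indicator {a..b} s *\<^sub>R (u s * g s))
      = (\<lambda>s. (indicator {a..b} s * u s) * (indicator {a..b} s * g s))"
    by (auto simp: indicator_def)
  ultimately have meas: "set_borel_measurable lborel {a..b} (\<lambda>s. u s * g s)"
    unfolding set_borel_measurable_def by simp
  have bound: "\<bar>u s * g s\<bar> \<le> \<bar>M * g s\<bar>" if "s \<in> {a..b}" for s
  proof -
    have "\<bar>u s\<bar> \<le> \<bar>M\<bar>"
      using M[OF that] by linarith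
    then show ?thesis
      unfolding abs_mult by (rule mult_right_mono) simp
  qed
  have "set_integrable lborel {a..b} (\<lambda>s. M * g s)"
    using g by simp
  then show ?thesis
    using meas by (rule set_integrable_bound[OF _ _ AE_I2]) (simp add: bound)
qed

lemma set_integral_Icc_FTC:
  fixes F F' :: "real \<Rightarrow> real"
  assumes "a \<le> b"
    and "\<And>x. x \<in> {a..b} \<Longrightarrow> (F has_real_derivative F' x) (at x within {a..b})"
    and "continuous_on {a..b} F'"
  shows "(LINT x:{a..b}|lborel. F' x) = F b - F a"
  unfolding set_lebesgue_integral_def using assms
  by (intro integral_FTC_atLeastAtMost) (auto simp: has_real_derivative_iff_has_vector_derivative)

lemma set_integral_by_parts_indefinite:
  fixes u u' g :: "real \<Rightarrow> real"
  assumes u: "\<And>s. s \<in> {a..b} \<Longrightarrow> (u has_real_derivative u' s) (at s within {a..b})"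
    and u': "continuous_on {a..b} u'"
    and g: "set_integrable lborel {a..b} g"
  shows "(LINT s:{a..b}|lborel. u s * g s)
       = u b * (LINT r:{a..b}|lborel. g r) - (LINT s:{a..b}|lborel. u' s * (LINT r:{a..s}|lborel. g r))"
proof -
  have "(LINT s:{a..b}|lborel. u' s * (LINT r:{a..s}|lborel. g r))
      = (LINT r:{a..b}|lborel. g r * (LINT s:{r..b}|lborel. u' s))"
    using g borel_integrable_atLeastAtMost'[OF u'] by (rule set_integral_triangle_Fubini)
  also have "\<dots> = (LINT r:{a..b}|lborel. u b * g r - u r * g r)"
  proof -
    have tail: "(LINT s:{r..b}|lborel. u' s) = u b - u r" if "r \<in> {a..b}" for r
      using that by (intro set_integral_Icc_FTC) (auto intro: DERIV_subset[OF u] continuous_on_subset[OF u'])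
    show ?thesis
      by (rule set_lebesgue_integral_cong) (auto simp: tail algebra_simps)
  qed
  also have "\<dots> = u b * (LINT r:{a..b}|lborel. g r) - (LINT s:{a..b}|lborel. u s * g s)"
    using g set_integrable_continuous_mult[OF DERIV_continuous_on[OF u] g] by simp
  finally show ?thesis
    by simp
qed

lemma continuous_on_indefinite_set_integral:
  fixes g :: "real \<Rightarrow> real"
  assumes g: "set_integrable lborel {a..b} g"
  shows "continuous_on {a..b} (\<lambda>s. LINT r:{a..s}|lborel. g r)"
proof -
  have "continuous_on {a..b} (\<lambda>s. integral {a..s} g)"
    using set_borel_integral_eq_integral(1)[OF g] by (rule indefinite_integral_continuous_1)
  moreover have "integral {a..s} g = (LINT r:{a..s}|lborel. g r)" if "s \<in> {a..b}" for s
    using set_borel_integral_eq_integral(2)[OF set_integrable_subset[OF g]] that by auto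
  ultimately show ?thesis
    by (rule continuous_on_eq)
qed

lemma has_real_derivative_indefinite_set_integral:
  fixes g :: "real \<Rightarrow> real"
  assumes g: "continuous_on {a..b} g" and t: "t \<in> {a..b}"
  shows "((\<lambda>s. LINT r:{a..s}|lborel. g r) has_real_derivative g t) (at t within {a..b})"
proof (rule has_field_derivative_transform_within[OF integral_has_real_derivative[OF g t] zero_less_one t])
  fix s assume "s \<in> {a..b}"
  then show "integral {a..s} g = (LINT r:{a..s}|lborel. g r)"
    by (intro set_borel_integral_eq_integral(2)[symmetric] borel_integrable_atLeastAtMost'
        continuous_on_subset[OF g]) auto
qed

lemma set_integral_le_head_plus_majorant:
  fixes h g :: "real \<Rightarrow> real"
  assumes "T \<le> t"
    and h: "set_integrable lborel {0..t} h" and g: "set_integrable lborel {0..t} g"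
    and g_nonneg: "\<And>s. s \<in> {0..T} \<Longrightarrow> 0 \<le> g s"
    and h_le_g: "\<And>s. s \<in> {T<..t} \<Longrightarrow> h s \<le> g s"
  shows "(LINT s:{0..t}|lborel. h s) \<le> (LINT s:{0..T}|lborel. h s) + (LINT s:{0..t}|lborel. g s)"
proof -
  have restrict: "(\<lambda>s. indicator {0..t} s *\<^sub>R (indicator {0..T} s * h s))
                = (\<lambda>s. indicator {0..T} s *\<^sub>R h s)"
    using \<open>T \<le> t\<close> by (auto simp: indicator_def)
  have head_int: "set_integrable lborel {0..t} (\<lambda>s. indicator {0..T} s * h s)"
    using set_integrable_subset[OF h, of "{0..T}"] \<open>T \<le> t\<close>
    unfolding set_integrable_def restrict by auto
  have head: "(LINT s:{0..t}|lborel. indicator {0..T} s * h s) = (LINT s:{0..T}|lborel. h s)"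
    unfolding set_lebesgue_integral_def restrict ..
  have "(LINT s:{0..t}|lborel. h s) \<le> (LINT s:{0..t}|lborel. indicator {0..T} s * h s + g s)"
  proof (rule set_integral_mono[OF h set_integral_add(1)[OF head_int g]])
    fix s assume "s \<in> {0..t}"
    then show "h s \<le> indicator {0..T} s * h s + g s"
      using g_nonneg[of s] h_le_g[of s] by (cases "s \<le> T") auto
  qed
  then show ?thesis
    using head set_integral_add(2)[OF head_int g] by simp
qed

lemma weighted_integral_le_head_plus_tail:
  fixes m w z :: "real \<Rightarrow> real"
  assumes m_pos: "\<And>s. 0 \<le> s \<Longrightarrow> 0 < m s" and w_nonneg: "\<And>s. 0 \<le> s \<Longrightarrow> 0 \<le> w s"
    and mw_cont: "continuous_on {0..t} (\<lambda>s. m s * w s)" and z_cont: "continuous_on {0..t} z"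
    and mw_bound: "(LINT s:{0..t}|lborel. m s * w s) \<le> B * m t"
    and T: "0 \<le> T" "T \<le> t" and \<delta>: "0 \<le> \<delta>" and z_small: "\<And>s. T < s \<Longrightarrow> \<bar>z s\<bar> \<le> \<delta>"
  shows "(LINT s:{0..t}|lborel. m s * w s * \<bar>z s\<bar>)
       \<le> (LINT s:{0..T}|lborel. m s * w s * \<bar>z s\<bar>) + \<delta> * \<bar>B\<bar> * m t"
proof -
  have mw_int: "set_integrable lborel {0..t} (\<lambda>s. m s * w s)"
    by (rule borel_integrable_atLeastAtMost'[OF mw_cont])
  have "(LINT s:{0..t}|lborel. m s * w s * \<bar>z s\<bar>)
      \<le> (LINT s:{0..T}|lborel. m s * w s * \<bar>z s\<bar>) + (LINT s:{0..t}|lborel. \<delta> * (m s * w s))"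
  proof (rule set_integral_le_head_plus_majorant[OF \<open>T \<le> t\<close>])
    show "set_integrable lborel {0..t} (\<lambda>s. m s * w s * \<bar>z s\<bar>)"
      by (intro borel_integrable_atLeastAtMost' continuous_intros mw_cont z_cont)
    show "0 \<le> \<delta> * (m s * w s)" if "s \<in> {0..T}" for s
      using that m_pos[of s] w_nonneg[of s] \<delta> by simp
    show "m s * w s * \<bar>z s\<bar> \<le> \<delta> * (m s * w s)" if "s \<in> {T<..t}" for s
      using that T z_small[of s] m_pos[of s] w_nonneg[of s]
      by (simp add: mult.commute[of \<delta>] mult_left_mono)
  qed (use mw_int in simp)
  also have "(LINT s:{0..t}|lborel. \<delta> * (m s * w s)) \<le> \<delta> * (\<bar>B\<bar> * m t)"
    using mw_bound m_pos[of t] T \<delta>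
    by (auto intro!: mult_left_mono order_trans[OF _ mult_right_mono[OF abs_ge_self]])
  finally show ?thesis
    by (simp add: mult.assoc)
qed

lemma weighted_average_tendsto_0:
  fixes m w z :: "real \<Rightarrow> real"
  assumes m_pos: "\<And>s. 0 \<le> s \<Longrightarrow> 0 < m s"
    and m_lim: "filterlim m at_top at_top"
    and w_nonneg: "\<And>s. 0 \<le> s \<Longrightarrow> 0 \<le> w s"
    and mw_cont: "\<And>t. continuous_on {0..t} (\<lambda>s. m s * w s)"
    and z_cont: "\<And>t. continuous_on {0..t} z"
    and mw_bound: "\<And>t. 0 \<le> t \<Longrightarrow> (LINT s:{0..t}|lborel. m s * w s) \<le> B * m t"
    and z_lim: "(z \<longlongrightarrow> 0) at_top"
  shows "((\<lambda>t. (LINT s:{0..t}|lborel. m s * w s * \<bar>z s\<bar>) / m t) \<longlongrightarrow> 0) at_top"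
proof (rule tendstoI)
  fix \<epsilon> :: real assume "0 < \<epsilon>"
  define \<delta> where "\<delta> = \<epsilon> / (2 * (\<bar>B\<bar> + 1))"
  have "0 < \<delta>" "\<delta> * \<bar>B\<bar> < \<epsilon> / 2"
    using \<open>0 < \<epsilon>\<close> by (simp_all add: \<delta>_def field_simps)
  obtain N where N: "\<And>s. N \<le> s \<Longrightarrow> \<bar>z s\<bar> < \<delta>"
    using tendstoD[OF z_lim \<open>0 < \<delta>\<close>] by (auto simp: eventually_at_top_linorder)
  define T where "T = max N 0"
  define C where "C = (LINT s:{0..T}|lborel. m s * w s * \<bar>z s\<bar>)"
  have "\<forall>\<^sub>F t in at_top. 2 * \<bar>C\<bar> / \<epsilon> < m t"
    using m_lim by (simp add: filterlim_at_top_dense)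
  moreover have "\<forall>\<^sub>F t in at_top. T \<le> t"
    by (rule eventually_ge_at_top)
  ultimately show "\<forall>\<^sub>F t in at_top. dist ((LINT s:{0..t}|lborel. m s * w s * \<bar>z s\<bar>) / m t) 0 < \<epsilon>"
  proof eventually_elim
    case (elim t)
    have "0 < m t"
      using m_pos[of t] elim(2) by (simp add: T_def)
    have "(LINT s:{0..t}|lborel. m s * w s * \<bar>z s\<bar>) \<le> C + \<delta> * \<bar>B\<bar> * m t"
      unfolding C_def using elim(2) \<open>0 < \<delta>\<close> N mw_bound[of t]
      by (intro weighted_integral_le_head_plus_tail m_pos w_nonneg mw_cont z_cont)
         (auto simp: T_def less_imp_le)
    moreover have "\<delta> * \<bar>B\<bar> * m t < \<epsilon> / 2 * m t"
      using \<open>\<delta> * \<bar>B\<bar> < \<epsilon> / 2\<close> \<open>0 < m t\<close> by (rule mult_strict_right_mono)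
    moreover have "C < \<epsilon> / 2 * m t"
      using elim(1) \<open>0 < \<epsilon>\<close> by (simp add: pos_divide_less_eq mult.commute)
    ultimately have "(LINT s:{0..t}|lborel. m s * w s * \<bar>z s\<bar>) < \<epsilon> * m t"
      by linarith
    moreover have "0 \<le> (LINT s:{0..t}|lborel. m s * w s * \<bar>z s\<bar>)"
      unfolding set_lebesgue_integral_def
      by (intro Bochner_Integration.integral_nonneg)
         (auto simp: indicator_def intro!: mult_nonneg_nonneg m_pos[THEN less_imp_le] w_nonneg)
    ultimately show ?case
      using \<open>0 < m t\<close> by (simp add: dist_real_def pos_divide_less_eq)
  qed
qed

lemma y1_eq_exp_mult_integral:
  "y1 \<omega> f t = exp (- (\<omega>^2) * t) * (LINT r:{0..t}|lborel. exp (\<omega>^2 * r) * f r)"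
proof -
  have "y1 \<omega> f t = (LINT r:{0..t}|lborel. exp (- (\<omega>^2) * t) * (exp (\<omega>^2 * r) * f r))"
    unfolding y1_def
    by (rule set_lebesgue_integral_cong) (auto simp: exp_add[symmetric] algebra_simps)
  then show ?thesis by simp
qed

lemma continuous_on_y1:
  assumes f: "set_integrable lborel {0..t} f"
  shows "continuous_on {0..t} (y1 \<omega> f)"
  unfolding y1_eq_exp_mult_integral
  by (intro continuous_intros continuous_on_indefinite_set_integral set_integrable_continuous_mult f)

lemma set_integral_mult_by_parts_y1:
  fixes u u' f :: "real \<Rightarrow> real"
  assumes f: "set_integrable lborel {0..t} f"
    and u: "\<And>s. s \<in> {0..t} \<Longrightarrow> (u has_real_derivative u' s) (at s within {0..t})"
    and u': "continuous_on {0..t} u'"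
  shows "(LINT s:{0..t}|lborel. u s * f s)
       = u t * y1 \<omega> f t - (LINT s:{0..t}|lborel. (u' s - \<omega>^2 * u s) * y1 \<omega> f s)"
proof -
  define v where "v s = u s * exp (- (\<omega>^2) * s)" for s
  define v' where "v' s = (u' s - \<omega>^2 * u s) * exp (- (\<omega>^2) * s)" for s
  define h where "h r = exp (\<omega>^2 * r) * f r" for r
  have "(v has_real_derivative v' s) (at s within {0..t})" if "s \<in> {0..t}" for s
    unfolding v_def v'_def using u[OF that] by (auto intro!: derivative_eq_intros simp: algebra_simps)
  moreover have "continuous_on {0..t} v'"
    unfolding v'_def by (intro continuous_intros u' DERIV_continuous_on[OF u])
  moreover have "set_integrable lborel {0..t} h"
    unfolding h_def by (intro set_integrable_continuous_mult f continuous_intros)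
  ultimately have "(LINT s:{0..t}|lborel. v s * h s)
      = v t * (LINT r:{0..t}|lborel. h r) - (LINT s:{0..t}|lborel. v' s * (LINT r:{0..s}|lborel. h r))"
    by (rule set_integral_by_parts_indefinite)
  moreover have "(LINT s:{0..t}|lborel. v s * h s) = (LINT s:{0..t}|lborel. u s * f s)"
    unfolding v_def h_def by (rule set_lebesgue_integral_cong) (auto simp: exp_minus field_simps)
  ultimately show ?thesis
    by (simp add: v_def v'_def h_def y1_eq_exp_mult_integral mult.assoc)
qed

locale decreasing_damping =
  fixes p p' :: "real \<Rightarrow> real"
  assumes p_deriv: "\<And>t. t \<ge> 0 \<Longrightarrow> (p has_real_derivative p' t) (at t within {0..})"
    and p'_cont: "continuous_on {0..} p'"
    and p_pos: "\<And>t. t \<ge> 0 \<Longrightarrow> p t > 0"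
    and p'_neg: "\<And>t. t \<ge> 0 \<Longrightarrow> p' t < 0"
    and p_int_div: "filterlim (\<lambda>T. LINT t:{0..T}|lborel. p t) at_top at_top"
    and p_sq_int: "set_integrable lborel {0..} (\<lambda>t. (p t)^2)"
begin

lemma p_has_derivative: "s \<in> {0..t} \<Longrightarrow> (p has_real_derivative p' s) (at s within {0..t})"
  using DERIV_subset[OF p_deriv] by auto

lemma continuous_on_p: "continuous_on {0..t} p"
  using DERIV_continuous_on[OF p_has_derivative] .

lemma continuous_on_p': "continuous_on {0..t} p'"
  by (rule continuous_on_subset[OF p'_cont]) auto

lemma p_le_p0:
  assumes "0 \<le> t"
  shows "p t \<le> p 0"
proof -
  have "p t - p 0 = (LINT s:{0..t}|lborel. p' s)"
    by (rule set_integral_Icc_FTC[OF assms p_has_derivative continuous_on_p', symmetric])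
  also have "\<dots> \<le> (LINT s:{0..t}|lborel. 0)"
    using p'_neg
    by (intro set_integral_mono borel_integrable_atLeastAtMost' continuous_on_p')
       (auto simp: less_imp_le set_integrable_def)
  finally show ?thesis by simp
qed

definition \<mu> :: "real \<Rightarrow> real" where
  "\<mu> t = exp ((LINT \<tau>:{0..t}|lborel. p \<tau>) / 2)"

lemma mu_pos: "0 < \<mu> t"
  by (simp add: \<mu>_def)

lemma mu_has_derivative:
  "s \<in> {0..t} \<Longrightarrow> (\<mu> has_real_derivative \<mu> s * (p s / 2)) (at s within {0..t})"
  unfolding \<mu>_def
  by (auto intro!: derivative_eq_intros has_real_derivative_indefinite_set_integral continuous_on_p)

lemma continuous_on_mu: "continuous_on {0..t} \<mu>"
  using DERIV_continuous_on[OF mu_has_derivative] .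

lemma set_integral_p_Icc:
  assumes "0 \<le> s" "s \<le> t"
  shows "(LINT \<tau>:{s..t}|lborel. p \<tau>) = (LINT \<tau>:{0..t}|lborel. p \<tau>) - (LINT \<tau>:{0..s}|lborel. p \<tau>)"
  using assms
  by (intro set_integral_Icc_FTC continuous_on_subset[OF continuous_on_p]
        DERIV_subset[OF has_real_derivative_indefinite_set_integral[OF continuous_on_p]]) auto

lemma E_eq_mu_quotient:
  assumes "0 \<le> s" "s \<le> t"
  shows "E p t s = \<mu> s / \<mu> t"
  unfolding E_def \<mu>_def set_integral_p_Icc[OF assms] by (simp add: exp_diff[symmetric] field_simps)

lemma mu_mono:
  assumes "0 \<le> s" "s \<le> t"
  shows "\<mu> s \<le> \<mu> t"
proof -
  have "0 \<le> (LINT \<tau>:{s..t}|lborel. p \<tau>)"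
    unfolding set_lebesgue_integral_def using assms p_pos
    by (intro Bochner_Integration.integral_nonneg) (auto simp: indicator_def less_imp_le)
  then show ?thesis
    unfolding \<mu>_def set_integral_p_Icc[OF assms] by simp
qed

lemma filterlim_mu_at_top: "filterlim \<mu> at_top at_top"
proof -
  have "filterlim (\<lambda>t. 1 / 2 * (LINT \<tau>:{0..t}|lborel. p \<tau>)) at_top at_top"
    by (rule filterlim_tendsto_pos_mult_at_top[OF tendsto_const _ p_int_div]) simp
  then show ?thesis
    unfolding \<mu>_def by (auto intro: filterlim_compose[OF exp_at_top])
qed

lemma set_integral_mu_damping_le:
  assumes "0 \<le> t"
  shows "(LINT s:{0..t}|lborel. \<mu> s * (p s / 2)) \<le> \<mu> t"
  using set_integral_Icc_FTC[OF assms mu_has_derivative] mu_pos[of 0]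
  by (simp add: continuous_intros continuous_on_mu continuous_on_p)

definition q :: "real \<Rightarrow> real" where
  "q t = (p t)^2 / 4 + p' t / 2"

lemma continuous_on_q: "continuous_on {0..t} q"
  unfolding q_def by (intro continuous_intros continuous_on_p continuous_on_p') auto

lemma abs_q_le: "0 \<le> s \<Longrightarrow> \<bar>q s\<bar> \<le> (p s)^2 / 4 - p' s / 2"
  using p'_neg[of s] unfolding q_def by (simp add: abs_le_iff add_nonneg_nonneg)

lemma set_integral_mu_abs_q_le:
  assumes t: "0 \<le> t"
  shows "(LINT s:{0..t}|lborel. \<mu> s * \<bar>q s\<bar>)
       \<le> ((LINT s:{0..}|lborel. (p s)^2) / 4 + p 0 / 2) * \<mu> t"
proof -
  have p2_int: "set_integrable lborel {0..t} (\<lambda>s. (p s)^2)"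
    by (intro borel_integrable_atLeastAtMost' continuous_intros continuous_on_p)
  have p'_int: "set_integrable lborel {0..t} p'"
    by (rule borel_integrable_atLeastAtMost'[OF continuous_on_p'])
  have "(LINT s:{0..t}|lborel. \<mu> s * \<bar>q s\<bar>) \<le> (LINT s:{0..t}|lborel. \<mu> t * ((p s)^2 / 4 - p' s / 2))"
  proof (rule set_integral_mono)
    show "set_integrable lborel {0..t} (\<lambda>s. \<mu> s * \<bar>q s\<bar>)"
      by (intro borel_integrable_atLeastAtMost' continuous_intros continuous_on_mu continuous_on_q)
    show "set_integrable lborel {0..t} (\<lambda>s. \<mu> t * ((p s)^2 / 4 - p' s / 2))"
      using p2_int p'_int by simp
  next
    fix s assume "s \<in> {0..t}"
    then show "\<mu> s * \<bar>q s\<bar> \<le> \<mu> t * ((p s)^2 / 4 - p' s / 2)"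
      by (intro mult_mono mu_mono abs_q_le less_imp_le[OF mu_pos]) auto
  qed
  also have "\<dots> = \<mu> t * ((LINT s:{0..t}|lborel. (p s)^2) / 4 - (p t - p 0) / 2)"
    using p2_int p'_int set_integral_Icc_FTC[OF t p_has_derivative continuous_on_p']
    by (simp add: set_integral_diff)
  also have "\<dots> \<le> \<mu> t * ((LINT s:{0..}|lborel. (p s)^2) / 4 + p 0 / 2)"
  proof -
    have "(LINT s:{0..t}|lborel. (p s)^2) \<le> (LINT s:{0..}|lborel. (p s)^2)"
      unfolding set_lebesgue_integral_def using p2_int p_sq_int unfolding set_integrable_def
      by (intro Bochner_Integration.integral_mono) (auto simp: indicator_def)
    then have "(LINT s:{0..t}|lborel. (p s)^2) / 4 - (p t - p 0) / 2
             \<le> (LINT s:{0..}|lborel. (p s)^2) / 4 + p 0 / 2"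
      using p_pos[OF t] by (simp add: field_simps)
    then show ?thesis
      by (rule mult_left_mono) (rule less_imp_le[OF mu_pos])
  qed
  finally show ?thesis
    by (simp add: mult.commute)
qed

end

locale damped_oscillator = decreasing_damping +
  fixes \<omega> :: real and f x x' :: "real \<Rightarrow> real"
  assumes f_loc: "\<And>T. T \<ge> 0 \<Longrightarrow> set_integrable lborel {0..T} f"
    and x_deriv: "\<And>t. t \<ge> 0 \<Longrightarrow> (x has_real_derivative x' t) (at t within {0..})"
    and x'_int: "\<And>t. t \<ge> 0 \<Longrightarrow>
       set_integrable lborel {0..t} (\<lambda>s. f s - p s * x' s - \<omega>^2 * x s)"
    and x_ode: "\<And>t. t \<ge> 0 \<Longrightarrow>
       x' t = x' 0 + (LINT s:{0..t}|lborel. f s - p s * x' s - \<omega>^2 * x s)"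
    and x0: "x 0 = 0" and x'0: "x' 0 = 0"
begin

definition forcing_response :: "real \<Rightarrow> real" where
  "forcing_response t = (LINT s:{0..t}|lborel. E p t s * L2 \<omega> t s * y1 \<omega> f s)"

lemma f_integrable: "set_integrable lborel {0..t} f"
  using f_loc[of t] by (cases "0 \<le> t") auto

lemma set_integral_acceleration:
  "0 \<le> t \<Longrightarrow> (LINT s:{0..t}|lborel. f s - p s * x' s - \<omega>^2 * x s) = x' t"
  using x_ode[of t] x'0 by simp

lemma x_has_derivative: "s \<in> {0..t} \<Longrightarrow> (x has_real_derivative x' s) (at s within {0..t})"
  using DERIV_subset[OF x_deriv] by auto

lemma continuous_on_x: "continuous_on {0..t} x"
  using DERIV_continuous_on[OF x_has_derivative] .

lemma continuous_on_x': "continuous_on {0..t} x'"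
proof (cases "0 \<le> t")
  case True
  have "continuous_on {0..t} (\<lambda>s. LINT r:{0..s}|lborel. f r - p r * x' r - \<omega>^2 * x r)"
    using x'_int[OF True] by (rule continuous_on_indefinite_set_integral)
  then show ?thesis
    by (rule continuous_on_eq) (simp add: set_integral_acceleration)
qed simp

lemma continuous_on_y1_f: "continuous_on {0..t} (y1 \<omega> f)"
  using f_integrable by (rule continuous_on_y1)

definition kernel :: "real \<Rightarrow> real \<Rightarrow> real" where
  "kernel t s = \<mu> s * cos (\<omega> * (t - s))"

definition kernel_deriv :: "real \<Rightarrow> real \<Rightarrow> real" where
  "kernel_deriv t s = \<mu> s * (p s / 2) * cos (\<omega> * (t - s)) + \<mu> s * \<omega> * sin (\<omega> * (t - s))"

lemma kernel_has_derivative: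
  "s \<in> {0..t} \<Longrightarrow> (kernel t has_real_derivative kernel_deriv t s) (at s within {0..t})"
  unfolding kernel_def kernel_deriv_def using mu_has_derivative
  by (auto intro!: derivative_eq_intros simp: algebra_simps)

lemma continuous_on_kernel: "continuous_on {0..t} (kernel t)"
  unfolding kernel_def by (intro continuous_intros continuous_on_mu)

lemma continuous_on_kernel_deriv: "continuous_on {0..t} (kernel_deriv t)"
  unfolding kernel_deriv_def by (intro continuous_intros continuous_on_mu continuous_on_p) auto

lemma set_integral_mult_acceleration_by_parts:
  fixes u u' :: "real \<Rightarrow> real"
  assumes t: "0 \<le> t"
    and u: "\<And>s. s \<in> {0..t} \<Longrightarrow> (u has_real_derivative u' s) (at s within {0..t})"
    and u': "continuous_on {0..t} u'"
  shows "(LINT s:{0..t}|lborel. u s * (f s - p s * x' s - \<omega>^2 * x s))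
       = u t * x' t - (LINT s:{0..t}|lborel. u' s * x' s)"
proof -
  have "(LINT s:{0..t}|lborel. u s * (f s - p s * x' s - \<omega>^2 * x s))
      = u t * (LINT r:{0..t}|lborel. f r - p r * x' r - \<omega>^2 * x r)
        - (LINT s:{0..t}|lborel. u' s * (LINT r:{0..s}|lborel. f r - p r * x' r - \<omega>^2 * x r))"
    using u u' x'_int[OF t] by (rule set_integral_by_parts_indefinite)
  also have "(LINT s:{0..t}|lborel. u' s * (LINT r:{0..s}|lborel. f r - p r * x' r - \<omega>^2 * x r))
      = (LINT s:{0..t}|lborel. u' s * x' s)"
    by (rule set_lebesgue_integral_cong) (auto simp: set_integral_acceleration)
  finally show ?thesis
    using t by (simp add: set_integral_acceleration)
qed

text \<open>Duhamel's formula for \<open>(\<mu> x)'\<close>. As \<open>x'\<close> is only absolutely continuous, the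
  kernel is integrated by parts against the acceleration instead of differentiating \<open>x'\<close>.\<close>
lemma damped_velocity_identity:
  assumes t: "0 \<le> t"
  shows "(LINT s:{0..t}|lborel. kernel t s * (f s + q s * x s)) = \<mu> t * (x' t + p t * x t / 2)"
proof -
  define B where "B s = \<mu> s * x s * (p s / 2 * cos (\<omega> * (t - s)) - \<omega> * sin (\<omega> * (t - s)))" for s
  define B' where "B' s = kernel_deriv t s * p s * x s / 2 + kernel t s * p' s * x s / 2
      + kernel t s * p s * x' s / 2 - \<omega> * (\<mu> s * (p s / 2) * sin (\<omega> * (t - s)) * x s
      - \<mu> s * \<omega> * cos (\<omega> * (t - s)) * x s + \<mu> s * sin (\<omega> * (t - s)) * x' s)" for s
  have B_deriv: "(B has_real_derivative B' s) (at s within {0..t})" if "s \<in> {0..t}" for s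
    using mu_has_derivative[OF that] p_has_derivative[OF that] x_has_derivative[OF that]
    unfolding B_def B'_def kernel_def kernel_deriv_def
    by (auto intro!: derivative_eq_intros simp: algebra_simps)
  have B'_cont: "continuous_on {0..t} B'"
    unfolding B'_def
    by (intro continuous_intros continuous_on_kernel continuous_on_kernel_deriv continuous_on_mu
        continuous_on_p continuous_on_p' continuous_on_x continuous_on_x') auto
  have boundary: "(LINT s:{0..t}|lborel. B' s) = \<mu> t * p t * x t / 2"
    using set_integral_Icc_FTC[OF t B_deriv B'_cont] by (simp add: B_def x0)
  have "kernel t s * (f s + q s * x s)
      = kernel t s * (f s - p s * x' s - \<omega>^2 * x s) + (kernel_deriv t s * x' s + B' s)" for s
    unfolding kernel_def kernel_deriv_def B'_def q_def by (simp add: algebra_simps power2_eq_square)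
  moreover have "set_integrable lborel {0..t} (\<lambda>s. kernel t s * (f s - p s * x' s - \<omega>^2 * x s))"
    by (intro set_integrable_continuous_mult x'_int t continuous_on_kernel)
  moreover have "set_integrable lborel {0..t} (\<lambda>s. kernel_deriv t s * x' s)"
    by (intro borel_integrable_atLeastAtMost' continuous_intros continuous_on_kernel_deriv
        continuous_on_x')
  moreover have "set_integrable lborel {0..t} B'"
    using B'_cont by (rule borel_integrable_atLeastAtMost')
  ultimately have "(LINT s:{0..t}|lborel. kernel t s * (f s + q s * x s))
      = (LINT s:{0..t}|lborel. kernel t s * (f s - p s * x' s - \<omega>^2 * x s))
        + (LINT s:{0..t}|lborel. kernel_deriv t s * x' s) + (LINT s:{0..t}|lborel. B' s)"
    by (simp add: set_integral_add)
  moreover have "(LINT s:{0..t}|lborel. kernel t s * (f s - p s * x' s - \<omega>^2 * x s))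
      = \<mu> t * x' t - (LINT s:{0..t}|lborel. kernel_deriv t s * x' s)"
    using set_integral_mult_acceleration_by_parts[OF t kernel_has_derivative continuous_on_kernel_deriv]
    by (simp add: kernel_def[of t t])
  moreover have "\<mu> t * (x' t + p t * x t / 2) = \<mu> t * x' t + \<mu> t * p t * x t / 2"
    by (simp add: algebra_simps)
  ultimately show ?thesis
    using boundary by linarith
qed

lemma mu_mult_forcing_response:
  "\<mu> t * forcing_response t = (LINT s:{0..t}|lborel. \<mu> s * L2 \<omega> t s * y1 \<omega> f s)"
proof -
  have "forcing_response t = (LINT s:{0..t}|lborel. (1 / \<mu> t) * (\<mu> s * L2 \<omega> t s * y1 \<omega> f s))"
    unfolding forcing_response_def by (rule set_lebesgue_integral_cong) (auto simp: E_eq_mu_quotient)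
  then show ?thesis
    using mu_pos[of t] by simp
qed

definition remainder :: "real \<Rightarrow> real" where
  "remainder t = (LINT s:{0..t}|lborel. kernel t s * (q s * x s - p s / 2 * y1 \<omega> f s)) / \<mu> t"

lemma damped_velocity_identity_y1:
  assumes t: "0 \<le> t"
  shows "\<mu> t * (x' t + p t * x t / 2) = \<mu> t * y1 \<omega> f t
       + (LINT s:{0..t}|lborel. kernel t s * (q s * x s)
            - (kernel_deriv t s - \<omega>^2 * kernel t s) * y1 \<omega> f s)"
proof -
  have kf_int: "set_integrable lborel {0..t} (\<lambda>s. kernel t s * f s)"
    using continuous_on_kernel f_integrable by (rule set_integrable_continuous_mult)
  have kqx_int: "set_integrable lborel {0..t} (\<lambda>s. kernel t s * (q s * x s))"
    by (intro borel_integrable_atLeastAtMost' continuous_intros continuous_on_kernel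
        continuous_on_q continuous_on_x)
  have ky1_int: "set_integrable lborel {0..t} (\<lambda>s. (kernel_deriv t s - \<omega>^2 * kernel t s) * y1 \<omega> f s)"
    by (intro borel_integrable_atLeastAtMost' continuous_intros continuous_on_kernel
        continuous_on_kernel_deriv continuous_on_y1_f)
  have "\<mu> t * (x' t + p t * x t / 2)
      = (LINT s:{0..t}|lborel. kernel t s * f s) + (LINT s:{0..t}|lborel. kernel t s * (q s * x s))"
    using damped_velocity_identity[OF t] set_integral_add(2)[OF kf_int kqx_int]
    by (simp add: distrib_left)
  also have "(LINT s:{0..t}|lborel. kernel t s * f s)
      = \<mu> t * y1 \<omega> f t - (LINT s:{0..t}|lborel. (kernel_deriv t s - \<omega>^2 * kernel t s) * y1 \<omega> f s)"
    using set_integral_mult_by_parts_y1[where \<omega> = \<omega>, OF f_integrable[of t] kernel_has_derivative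
        continuous_on_kernel_deriv]
    by (simp add: kernel_def[of t t])
  finally show ?thesis
    using set_integral_diff(2)[OF kqx_int ky1_int] by simp
qed

lemma velocity_decomposition:
  assumes t: "0 \<le> t"
  shows "x' t - forcing_response t = y1 \<omega> f t - p t * x t / 2 + remainder t"
proof -
  have L2_int: "set_integrable lborel {0..t} (\<lambda>s. \<mu> s * L2 \<omega> t s * y1 \<omega> f s)"
    unfolding L2_def
    by (intro borel_integrable_atLeastAtMost' continuous_intros continuous_on_mu continuous_on_y1_f)
  have remainder_int: "set_integrable lborel {0..t} (\<lambda>s. kernel t s * (q s * x s - p s / 2 * y1 \<omega> f s))"
    by (intro borel_integrable_atLeastAtMost' continuous_intros continuous_on_kernel continuous_on_q
        continuous_on_x continuous_on_p continuous_on_y1_f) auto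
  have "(LINT s:{0..t}|lborel. kernel t s * (q s * x s)
          - (kernel_deriv t s - \<omega>^2 * kernel t s) * y1 \<omega> f s)
      = (LINT s:{0..t}|lborel. \<mu> s * L2 \<omega> t s * y1 \<omega> f s
          + kernel t s * (q s * x s - p s / 2 * y1 \<omega> f s))"
    unfolding kernel_def kernel_deriv_def L2_def by (simp add: algebra_simps)
  also have "\<dots> = \<mu> t * forcing_response t + \<mu> t * remainder t"
    using set_integral_add(2)[OF L2_int remainder_int] mu_pos[of t]
    by (simp add: remainder_def mu_mult_forcing_response)
  finally have "\<mu> t * (x' t - forcing_response t) = \<mu> t * (y1 \<omega> f t - p t * x t / 2 + remainder t)"
    using damped_velocity_identity_y1[OF t] by (simp add: algebra_simps)
  then show ?thesis
    using mu_pos[of t] by simp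
qed

lemma abs_remainder_integrand_le:
  assumes "0 \<le> s"
  shows "\<bar>kernel t s * (q s * x s - p s / 2 * y1 \<omega> f s)\<bar>
       \<le> \<mu> s * (p s / 2) * \<bar>y1 \<omega> f s\<bar> + \<mu> s * \<bar>q s\<bar> * \<bar>x s\<bar>"
proof -
  have "\<bar>q s * x s - p s / 2 * y1 \<omega> f s\<bar> \<le> \<bar>q s\<bar> * \<bar>x s\<bar> + p s / 2 * \<bar>y1 \<omega> f s\<bar>"
    using abs_triangle_ineq4[of "q s * x s" "p s / 2 * y1 \<omega> f s"] p_pos[OF assms]
    by (simp add: abs_mult)
  then have "\<mu> s * \<bar>cos (\<omega> * (t - s))\<bar> * \<bar>q s * x s - p s / 2 * y1 \<omega> f s\<bar>
      \<le> \<mu> s * 1 * (\<bar>q s\<bar> * \<bar>x s\<bar> + p s / 2 * \<bar>y1 \<omega> f s\<bar>)"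
    using mu_pos[of s] by (intro mult_mono) auto
  moreover have "\<bar>kernel t s * (q s * x s - p s / 2 * y1 \<omega> f s)\<bar>
      = \<mu> s * \<bar>cos (\<omega> * (t - s))\<bar> * \<bar>q s * x s - p s / 2 * y1 \<omega> f s\<bar>"
    using mu_pos[of s] by (simp add: kernel_def abs_mult)
  ultimately show ?thesis
    by (simp add: algebra_simps)
qed

lemma abs_remainder_le:
  assumes t: "0 \<le> t"
  shows "\<bar>remainder t\<bar> \<le> (LINT s:{0..t}|lborel. \<mu> s * (p s / 2) * \<bar>y1 \<omega> f s\<bar>) / \<mu> t
       + (LINT s:{0..t}|lborel. \<mu> s * \<bar>q s\<bar> * \<bar>x s\<bar>) / \<mu> t"
proof -
  define \<rho> where "\<rho> s = kernel t s * (q s * x s - p s / 2 * y1 \<omega> f s)" for s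
  define b where "b s = \<mu> s * (p s / 2) * \<bar>y1 \<omega> f s\<bar> + \<mu> s * \<bar>q s\<bar> * \<bar>x s\<bar>" for s
  have y1_int: "set_integrable lborel {0..t} (\<lambda>s. \<mu> s * (p s / 2) * \<bar>y1 \<omega> f s\<bar>)"
    by (intro borel_integrable_atLeastAtMost' continuous_intros continuous_on_mu continuous_on_p
        continuous_on_y1_f) auto
  have x_int: "set_integrable lborel {0..t} (\<lambda>s. \<mu> s * \<bar>q s\<bar> * \<bar>x s\<bar>)"
    by (intro borel_integrable_atLeastAtMost' continuous_intros continuous_on_mu continuous_on_q
        continuous_on_x)
  have \<rho>_int: "set_integrable lborel {0..t} \<rho>"
    unfolding \<rho>_def
    by (intro borel_integrable_atLeastAtMost' continuous_intros continuous_on_kernel continuous_on_q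
        continuous_on_x continuous_on_p continuous_on_y1_f) auto
  have "\<bar>\<rho> s\<bar> \<le> b s" if "s \<in> {0..t}" for s
    using that unfolding \<rho>_def b_def by (intro abs_remainder_integrand_le) simp
  then have "(LINT s:{0..t}|lborel. \<bar>\<rho> s\<bar>) \<le> (LINT s:{0..t}|lborel. b s)"
    using \<rho>_int y1_int x_int unfolding b_def by (intro set_integral_mono set_integrable_abs) auto
  then have "\<bar>LINT s:{0..t}|lborel. \<rho> s\<bar> \<le> (LINT s:{0..t}|lborel. b s)"
    using set_integral_norm_bound[OF \<rho>_int] by simp
  also have "\<dots> = (LINT s:{0..t}|lborel. \<mu> s * (p s / 2) * \<bar>y1 \<omega> f s\<bar>)
      + (LINT s:{0..t}|lborel. \<mu> s * \<bar>q s\<bar> * \<bar>x s\<bar>)"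
    unfolding b_def using y1_int x_int by (rule set_integral_add(2))
  finally have "\<bar>LINT s:{0..t}|lborel. \<rho> s\<bar> / \<mu> t
      \<le> ((LINT s:{0..t}|lborel. \<mu> s * (p s / 2) * \<bar>y1 \<omega> f s\<bar>)
        + (LINT s:{0..t}|lborel. \<mu> s * \<bar>q s\<bar> * \<bar>x s\<bar>)) / \<mu> t"
    by (rule divide_right_mono) (rule less_imp_le[OF mu_pos])
  then show ?thesis
    using mu_pos[of t] by (simp only: remainder_def \<rho>_def abs_divide abs_of_pos add_divide_distrib)
qed

lemma tendsto_remainder:
  assumes y1_lim: "(y1 \<omega> f \<longlongrightarrow> 0) at_top" and x_lim: "(x \<longlongrightarrow> 0) at_top"
  shows "(remainder \<longlongrightarrow> 0) at_top"
proof -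
  have "((\<lambda>t. (LINT s:{0..t}|lborel. \<mu> s * (p s / 2) * \<bar>y1 \<omega> f s\<bar>) / \<mu> t) \<longlongrightarrow> 0) at_top"
  proof (rule weighted_average_tendsto_0[where B = 1, OF mu_pos filterlim_mu_at_top _ _
        continuous_on_y1_f _ y1_lim])
    show "(LINT s:{0..t}|lborel. \<mu> s * (p s / 2)) \<le> 1 * \<mu> t" if "0 \<le> t" for t
      using set_integral_mu_damping_le[OF that] by simp
  qed (auto intro!: continuous_intros continuous_on_mu continuous_on_p less_imp_le[OF p_pos])
  moreover have "((\<lambda>t. (LINT s:{0..t}|lborel. \<mu> s * \<bar>q s\<bar> * \<bar>x s\<bar>) / \<mu> t) \<longlongrightarrow> 0) at_top"
    by (rule weighted_average_tendsto_0[OF mu_pos filterlim_mu_at_top _ _ continuous_on_x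
          set_integral_mu_abs_q_le x_lim])
       (auto intro!: continuous_intros continuous_on_mu continuous_on_q)
  ultimately show ?thesis
    by (rule Lim_null_comparison[OF eventually_mono[OF eventually_ge_at_top[of 0]], rotated,
          OF tendsto_add_zero])
       (unfold real_norm_def, rule abs_remainder_le)
qed

lemma tendsto_velocity_deviation:
  assumes y1_lim: "(y1 \<omega> f \<longlongrightarrow> 0) at_top" and x_lim: "(x \<longlongrightarrow> 0) at_top"
  shows "((\<lambda>t. x' t - forcing_response t) \<longlongrightarrow> 0) at_top"
proof -
  have "((\<lambda>t. \<bar>y1 \<omega> f t\<bar> + p 0 * \<bar>x t\<bar> / 2 + \<bar>remainder t\<bar>) \<longlongrightarrow> 0) at_top"
    by (intro tendsto_add_zero tendsto_divide_zero tendsto_mult_right_zero tendsto_rabs_zero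
        y1_lim x_lim tendsto_remainder)
  moreover have "norm (x' t - forcing_response t) \<le> \<bar>y1 \<omega> f t\<bar> + p 0 * \<bar>x t\<bar> / 2 + \<bar>remainder t\<bar>"
    if "0 \<le> t" for t
  proof -
    have "\<bar>p t * x t / 2\<bar> = p t * \<bar>x t\<bar> / 2"
      using p_pos[OF that] by (simp add: abs_mult)
    also have "\<dots> \<le> p 0 * \<bar>x t\<bar> / 2"
      using p_le_p0[OF that] by (intro divide_right_mono mult_right_mono) auto
    finally show ?thesis
      unfolding real_norm_def velocity_decomposition[OF that] by linarith
  qed
  ultimately show ?thesis
    by (rule Lim_null_comparison[OF eventually_mono[OF eventually_ge_at_top[of 0]], rotated])
qed

end

theorem mainTheorem9:
  fixes \<omega> :: real and p p' f x x' :: "real \<Rightarrow> real"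
  assumes omega_pos: "\<omega> > 0"
    and p_deriv: "\<And>t. t \<ge> 0 \<Longrightarrow> (p has_real_derivative p' t) (at t within {0..})"
    and p'_cont: "continuous_on {0..} p'"
    and p_pos: "\<And>t. t \<ge> 0 \<Longrightarrow> p t > 0"
    and p'_neg: "\<And>t. t \<ge> 0 \<Longrightarrow> p' t < 0"
    and p_int_div: "filterlim (\<lambda>T. LINT t:{0..T}|lborel. p t) at_top at_top"
    and p_sq_int: "set_integrable lborel {0..} (\<lambda>t. (p t)^2)"
    and f_loc: "\<And>T. T \<ge> 0 \<Longrightarrow> set_integrable lborel {0..T} f"
    and x_deriv: "\<And>t. t \<ge> 0 \<Longrightarrow> (x has_real_derivative x' t) (at t within {0..})"
    and x'_int: "\<And>t. t \<ge> 0 \<Longrightarrow>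
       set_integrable lborel {0..t} (\<lambda>s. f s - p s * x' s - \<omega>^2 * x s)"
    and x_ode: "\<And>t. t \<ge> 0 \<Longrightarrow>
       x' t = x' 0 + (LINT s:{0..t}|lborel. f s - p s * x' s - \<omega>^2 * x s)"
    and x0: "x 0 = 0" and x'0: "x' 0 = 0"
    and y1_lim: "(y1 \<omega> f \<longlongrightarrow> 0) at_top"
    and x_lim: "(x \<longlongrightarrow> 0) at_top"
  shows "(x' \<longlongrightarrow> 0) at_top \<longleftrightarrow>
         ((\<lambda>t. LINT s:{0..t}|lborel. E p t s * L2 \<omega> t s * y1 \<omega> f s) \<longlongrightarrow> 0) at_top"
proof -
  interpret damped_oscillator p p' \<omega> f x x'
    by unfold_locales (fact assms)+
  have deviation: "((\<lambda>t. x' t - forcing_response t) \<longlongrightarrow> 0) at_top"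
    using y1_lim x_lim by (rule tendsto_velocity_deviation)
  show ?thesis
    unfolding forcing_response_def[abs_def, symmetric]
  proof
    assume "(x' \<longlongrightarrow> 0) at_top"
    from tendsto_diff[OF this deviation] show "(forcing_response \<longlongrightarrow> 0) at_top"
      by simp
  next
    assume "(forcing_response \<longlongrightarrow> 0) at_top"
    from tendsto_add[OF this deviation] show "(x' \<longlongrightarrow> 0) at_top"
      by simp
  qed
qed

end
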